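(* For $n\ge1$, choose a composition $X=(c_1,\dots,c_h)$ of $n$ uniformly at random among all $2^{n-1}$ compositions of $n$, and choose one of the $n$ unit elements uniformly at random, where the elements are arranged so that the first $c_1$ elements have rank 1, the next $c_2$ have rank 2, etc. Then the probability that the chosen element has rank $r$ is $\dfrac{1}{n\,2^{n-1}}\sum_{i=r}^n\binom{n}{i}$, and the expected rank is $(n+3)/4$.
   Context: A composition of $n$ is a sequence of positive integers $(c_1,\dots,c_h)$ with $c_1+\dots+c_h=n$. *)

theory Defs
  imports "HOL-Probability.Probability"
begin

definition compositions :: "nat \<Rightarrow> nat list set" where
  "compositions n = {cs. (\<forall>c\<in>set cs. 0 < c) \<and> sum_list cs = n}"

text \<open>Rank of unit element j (1-based, 1 \<le> j \<le> n) in composition cs: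
  the first c1 elements have rank 1, the next c2 rank 2, etc.
  That is, the least k with j \<le> c1 + ... + ck.\<close>
definition comp_rank :: "nat list \<Rightarrow> nat \<Rightarrow> nat" where
  "comp_rank cs j = (LEAST k. j \<le> sum_list (take k cs))"

end

theory Submission
  imports Defs
begin

text \<open>Every composition of n + 1 arises exactly once from a composition of n, either by
prepending a part 1 or by enlarging the first part by one. In both cases the new first element
has rank 1 and element j + 1 inherits the rank of element j, raised by one in the first case
and unchanged in the second. Hence the weighted rank total
W n f = (sum over compositions cs of n and 1 <= j <= n of f (rank of j in cs)) satisfies
W (n + 1) f = 2^n f 1 + W n (f o Suc) + W n f. For f the indicator of r this is Pascal's rule
for the binomial tails sum_{i >= r} (n choose i); for f the identity it gives
8 W n id = n (n + 3) 2^n.\<close>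

definition incr_head :: "nat list \<Rightarrow> nat list" where
  "incr_head cs = Suc (hd cs) # tl cs"

lemma compositions_0: "compositions 0 = {[]}"
proof -
  have "cs = []" if "\<forall>c\<in>set cs. 0 < c" "sum_list cs = 0" for cs :: "nat list"
    using that by (cases cs) auto
  then show ?thesis by (auto simp: compositions_def)
qed

lemma Nil_notin_compositions: "0 < n \<Longrightarrow> [] \<notin> compositions n"
  by (auto simp: compositions_def)

lemma compositions_Suc:
  "compositions (Suc n) = Cons 1 ` compositions n \<union> incr_head ` (compositions n - {[]})"
proof (intro equalityI subsetI)
  fix cs assume "cs \<in> compositions (Suc n)"
  then obtain c rest where cs: "cs = c # rest" and pos: "0 < c" "\<forall>d\<in>set rest. 0 < d"
    and sum: "c + sum_list rest = Suc n"
    by (cases cs) (auto simp: compositions_def)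
  show "cs \<in> Cons 1 ` compositions n \<union> incr_head ` (compositions n - {[]})"
  proof (cases "c = 1")
    case True
    then show ?thesis using cs pos sum by (auto simp: compositions_def)
  next
    case False
    then have "(c - 1) # rest \<in> compositions n - {[]}" and "cs = incr_head ((c - 1) # rest)"
      using cs pos sum by (auto simp: compositions_def incr_head_def)
    then show ?thesis by blast
  qed
next
  fix cs assume "cs \<in> Cons 1 ` compositions n \<union> incr_head ` (compositions n - {[]})"
  then show "cs \<in> compositions (Suc n)"
    by (auto simp: compositions_def incr_head_def neq_Nil_conv)
qed

lemma finite_compositions: "finite (compositions n)"
  by (induction n) (simp_all add: compositions_0 compositions_Suc)

lemma sum_compositions_Suc:
  assumes "0 < n"
  shows "sum G (compositions (Suc n))
    = (\<Sum>cs\<in>compositions n. G (1 # cs)) + (\<Sum>cs\<in>compositions n. G (incr_head cs))"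
proof -
  have nonempty: "cs \<noteq> []" if "cs \<in> compositions n" for cs
    using that Nil_notin_compositions[OF assms] by auto
  have "inj_on incr_head (compositions n)"
    by (rule inj_onI) (auto simp: incr_head_def neq_Nil_conv dest!: nonempty)
  moreover have "Cons 1 ` compositions n \<inter> incr_head ` compositions n = {}"
  proof -
    have "hd cs \<noteq> 0" if "cs \<in> compositions n" for cs
      using that nonempty[OF that] by (auto simp: compositions_def neq_Nil_conv)
    then show ?thesis by (fastforce simp: incr_head_def)
  qed
  ultimately show ?thesis
    using Nil_notin_compositions[OF assms]
    by (simp add: compositions_Suc finite_compositions sum.union_disjoint sum.reindex)
qed

lemma card_compositions_Suc: "card (compositions (Suc n)) = 2 ^ n"
proof (induction n)
  case 0
  show ?case by (simp add: compositions_Suc compositions_0)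
next
  case (Suc n)
  then show ?case
    using sum_compositions_Suc[of "Suc n" "\<lambda>_. 1 :: nat"] by simp
qed

lemma comp_rank_Cons:
  assumes "0 < j" "j \<le> c + sum_list cs"
  shows "comp_rank (c # cs) j = (if j \<le> c then 1 else Suc (comp_rank cs (j - c)))"
proof -
  have "comp_rank (c # cs) j = Suc (LEAST k. j \<le> sum_list (take (Suc k) (c # cs)))"
    unfolding comp_rank_def
  proof (rule Least_Suc)
    show "j \<le> sum_list (take (Suc (length cs)) (c # cs))" using assms(2) by simp
  qed (use assms(1) in simp)
  also have "\<dots> = Suc (LEAST k. j \<le> c + sum_list (take k cs))"
    by simp
  also have "\<dots> = (if j \<le> c then 1 else Suc (comp_rank cs (j - c)))"
  proof (cases "j \<le> c")
    case False
    then have "(\<lambda>k. j \<le> c + sum_list (take k cs)) = (\<lambda>k. j - c \<le> sum_list (take k cs))"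
      by auto
    then show ?thesis using False by (simp add: comp_rank_def)
  qed (simp add: Least_eq_0)
  finally show ?thesis .
qed

lemma comp_rank_pos:
  assumes "0 < j" "j \<le> sum_list cs"
  shows "0 < comp_rank cs j"
  using assms comp_rank_Cons by (cases cs) auto

lemma sum_atLeast1_atMost_Suc:
  "(\<Sum>j=1..Suc n. f j) = f 1 + (\<Sum>j=1..n. f (Suc j))"
  by (subst sum.atLeast_Suc_atMost)
     (simp_all only: sum.shift_bounds_cl_Suc_ivl One_nat_def le_add1 plus_1_eq_Suc)

lemma sum_comp_rank_Cons_1:
  assumes "sum_list cs = n"
  shows "(\<Sum>j=1..Suc n. \<phi> (comp_rank (1 # cs) j))
    = \<phi> 1 + (\<Sum>j=1..n. \<phi> (Suc (comp_rank cs j)))"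
proof -
  have shift: "comp_rank (1 # cs) (Suc j) = Suc (comp_rank cs j)" if "j \<in> {1..n}" for j
    using that assms by (simp add: comp_rank_Cons)
  have first: "comp_rank (1 # cs) 1 = 1"
    by (simp add: comp_rank_Cons)
  show ?thesis
    unfolding sum_atLeast1_atMost_Suc first using shift
    by (intro arg_cong2[where f = "(+)"] sum.cong) simp_all
qed

lemma sum_comp_rank_incr_head:
  assumes "cs \<noteq> []" "sum_list cs = n"
  shows "(\<Sum>j=1..Suc n. \<phi> (comp_rank (incr_head cs) j))
    = \<phi> 1 + (\<Sum>j=1..n. \<phi> (comp_rank cs j))"
proof -
  obtain c rest where cs: "cs = c # rest" using assms(1) by (cases cs) auto
  have shift: "comp_rank (incr_head cs) (Suc j) = comp_rank cs j" if "j \<in> {1..n}" for j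
    using that assms(2) by (simp add: cs incr_head_def comp_rank_Cons)
  have first: "comp_rank (incr_head cs) 1 = 1"
    by (simp add: cs incr_head_def comp_rank_Cons)
  show ?thesis
    unfolding sum_atLeast1_atMost_Suc first using shift
    by (intro arg_cong2[where f = "(+)"] sum.cong) simp_all
qed

definition rank_sum :: "nat \<Rightarrow> (nat \<Rightarrow> 'a::comm_semiring_1) \<Rightarrow> 'a" where
  "rank_sum n \<phi> = (\<Sum>cs\<in>compositions n. \<Sum>j=1..n. \<phi> (comp_rank cs j))"

lemma rank_sum_0 [simp]: "rank_sum 0 \<phi> = 0"
  by (simp add: rank_sum_def)

lemma rank_sum_eq_sum_Times:
  "rank_sum n \<phi> = (\<Sum>(cs, j)\<in>compositions n \<times> {1..n}. \<phi> (comp_rank cs j))"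
  by (simp add: rank_sum_def sum.cartesian_product)

lemma rank_sum_Suc:
  "rank_sum (Suc n) \<phi> = 2 ^ n * \<phi> 1 + rank_sum n (\<lambda>k. \<phi> (Suc k)) + rank_sum n \<phi>"
proof (cases "n = 0")
  case True
  then show ?thesis by (simp add: rank_sum_def compositions_Suc compositions_0 comp_rank_Cons)
next
  case False
  then have "0 < n" by simp
  have sum_list: "sum_list cs = n" and nonempty: "cs \<noteq> []" if "cs \<in> compositions n" for cs
    using that False by (auto simp: compositions_def)
  have "rank_sum (Suc n) \<phi>
      = (\<Sum>cs\<in>compositions n. \<phi> 1 + (\<Sum>j=1..n. \<phi> (Suc (comp_rank cs j))))
      + (\<Sum>cs\<in>compositions n. \<phi> 1 + (\<Sum>j=1..n. \<phi> (comp_rank cs j)))"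
    unfolding rank_sum_def sum_compositions_Suc[OF \<open>0 < n\<close>]
    by (intro arg_cong2[where f = "(+)"] sum.cong refl)
       (simp_all only: sum_comp_rank_Cons_1 sum_comp_rank_incr_head sum_list nonempty
         not_False_eq_True)
  also have "\<dots> = of_nat (2 * card (compositions n)) * \<phi> 1
      + rank_sum n (\<lambda>k. \<phi> (Suc k)) + rank_sum n \<phi>"
    by (simp add: rank_sum_def sum.distrib algebra_simps mult_2)
  also have "2 * card (compositions n) = 2 ^ n"
    using False card_compositions_Suc[of "n - 1"] by (simp add: power_eq_if)
  finally show ?thesis by simp
qed

lemma rank_sum_add: "rank_sum n (\<lambda>k. \<phi> k + \<psi> k) = rank_sum n \<phi> + rank_sum n \<psi>"
  by (simp add: rank_sum_def sum.distrib)

lemma rank_sum_const: "rank_sum n (\<lambda>_. c) = of_nat (n * card (compositions n)) * c"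
  by (simp add: rank_sum_def mult_ac)

lemma rank_sum_id: "8 * rank_sum n (\<lambda>k. k) = n * (n + 3) * 2 ^ n"
proof (induction n)
  case (Suc n)
  have "rank_sum n Suc = rank_sum n (\<lambda>k. k) + n * card (compositions n)"
    using rank_sum_add[of n "\<lambda>k. k" "\<lambda>_. 1"] by (simp add: rank_sum_const)
  moreover have "2 * (n * card (compositions n)) = n * 2 ^ n"
    by (cases n) (simp_all add: card_compositions_Suc)
  ultimately show ?case
    using Suc.IH by (simp add: rank_sum_Suc algebra_simps)
qed simp

lemma sum_choose_tail_Suc:
  "(\<Sum>i=Suc k..Suc n. Suc n choose i) = (\<Sum>i=k..n. n choose i) + (\<Sum>i=Suc k..n. n choose i)"
proof -
  have "(\<Sum>i=Suc k..Suc n. Suc n choose i) = (\<Sum>i=k..n. n choose i) + (\<Sum>i=k..n. n choose Suc i)"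
    by (simp only: sum.shift_bounds_cl_Suc_ivl binomial_Suc_Suc sum.distrib)
  also have "(\<Sum>i=k..n. n choose Suc i) = (\<Sum>i=Suc k..n. n choose i)"
    by (cases "k \<le> n") (simp_all add: sum.shift_bounds_cl_Suc_ivl[symmetric])
  finally show ?thesis .
qed

lemma rank_sum_indicator_0: "rank_sum n (\<lambda>k. of_bool (k = 0)) = 0"
  unfolding rank_sum_def
  by (intro sum.neutral ballI) (auto simp: compositions_def intro!: comp_rank_pos)

lemma rank_sum_indicator:
  assumes "0 < r"
  shows "rank_sum n (\<lambda>k. of_bool (k = r)) = (\<Sum>i=r..n. n choose i)"
  using assms
proof (induction n arbitrary: r)
  case (Suc n)
  then obtain k where r: "r = Suc k" by (cases r) auto
  have "rank_sum (Suc n) (\<lambda>k. of_bool (k = r))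
      = 2 ^ n * of_bool (k = 0) + rank_sum n (\<lambda>k'. of_bool (k' = k))
        + rank_sum n (\<lambda>k. of_bool (k = r))"
    by (simp add: rank_sum_Suc r)
  also have "2 ^ n * of_bool (k = 0) + rank_sum n (\<lambda>k'. of_bool (k' = k)) = (\<Sum>i=k..n. n choose i)"
    using Suc.IH[of k]
    by (cases "k = 0") (simp_all add: rank_sum_indicator_0 atLeast0AtMost choose_row_sum)
  finally show ?case
    unfolding r sum_choose_tail_Suc using Suc.IH[OF Suc.prems] by (simp add: r)
qed simp

lemma pair_pmf_of_set:
  assumes "finite A" "A \<noteq> {}" "finite B" "B \<noteq> {}"
  shows "pair_pmf (pmf_of_set A) (pmf_of_set B) = pmf_of_set (A \<times> B)"
proof (rule pmf_eqI)
  fix x :: "'a \<times> 'b"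
  show "pmf (pair_pmf (pmf_of_set A) (pmf_of_set B)) x = pmf (pmf_of_set (A \<times> B)) x"
    using assms by (cases x) (simp add: pmf_pair card_cartesian_product indicator_def)
qed

theorem mainTheorem5:
  fixes n r :: nat
  assumes "n \<ge> 1" and "r \<ge> 1"
  defines "M \<equiv> pair_pmf (pmf_of_set (compositions n)) (pmf_of_set {1..n})"
  shows "measure_pmf.prob M {(cs, j). comp_rank cs j = r}
           = (\<Sum>i=r..n. real (n choose i)) / (real n * 2 ^ (n - 1))
         \<and> measure_pmf.expectation M (\<lambda>(cs, j). real (comp_rank cs j)) = (real n + 3) / 4"
proof -
  let ?\<Omega> = "compositions n \<times> {1..n}"
  have finite: "finite ?\<Omega>"
    by (simp add: finite_compositions)
  have card: "card ?\<Omega> = n * 2 ^ (n - 1)"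
    using card_compositions_Suc[of "n - 1"] assms(1) by (simp add: card_cartesian_product)
  then have nonempty: "?\<Omega> \<noteq> {}"
    using assms(1) by (intro notI) simp
  have M: "M = pmf_of_set ?\<Omega>"
    unfolding M_def using finite nonempty by (intro pair_pmf_of_set) (auto simp: finite_compositions)
  have "card (?\<Omega> \<inter> {(cs, j). comp_rank cs j = r}) = (\<Sum>i=r..n. n choose i)"
    using rank_sum_indicator[of r n] assms(2) finite
    by (simp add: rank_sum_eq_sum_Times case_prod_unfold)
  moreover have "(\<Sum>(cs, j)\<in>?\<Omega>. real (comp_rank cs j)) = real (rank_sum n (\<lambda>k. k))"
    by (simp add: rank_sum_eq_sum_Times of_nat_sum prod.case_distrib)
  moreover have "real (rank_sum n (\<lambda>k. k)) = real n * (real n + 3) * 2 ^ (n - 1) / 4"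
  proof -
    have "(2::real) ^ n = 2 * 2 ^ (n - 1)"
      using assms(1) by (simp flip: power_Suc)
    then show ?thesis
      using arg_cong[OF rank_sum_id[of n], of real] by simp
  qed
  ultimately show ?thesis
    unfolding M measure_pmf_of_set[OF nonempty finite] integral_pmf_of_set[OF nonempty finite]
    using card assms(1) by simp
qed

end
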